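(* Let $\ell\ge 1$ be an integer. In the game $\mathrm{CN}(2\ell+1,\ell+1)$, every position in $$S_1=\Big\{(x,\underbrace{0,\ldots,0}_{\ell-1},x,a_1,\ldots,a_\ell)\ \Big|\ x,a_1,\dots,a_\ell\ge 0 \text{ integers},\ \sum_{i=1}^{\ell}a_i=x\Big\}$$ (up to rotation and reflection) is a $\mathcal P$-position.
   Context: Circular Nim $\mathrm{CN}(n,k)$: $n$ stacks of tokens are arranged in a circle; a position is a vector $(p_1,\dots,p_n)$ of nonnegative integers giving the stack heights in order around the circle, determined only up to rotation and reflection. A move consists of choosing $k$ cyclically consecutive stacks and removing at least one token from at least one of these $k$ stacks (any number from each chosen stack; other stacks unchanged). Under normal play the last player able to move wins. A $\mathcal P$-position is one from which the player about to move loses under optimal play. *)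

theory Defs
  imports Main
begin

text \<open>Positions of Circular Nim CN(n,k): lists of stack heights of length n,
  listed in order around the circle (index j and (j+1) mod n are adjacent).\<close>

definition cn_window :: "nat \<Rightarrow> nat \<Rightarrow> nat \<Rightarrow> nat set" where
  "cn_window n k i = {(i + t) mod n | t. t < k}"

definition cn_move :: "nat \<Rightarrow> nat \<Rightarrow> nat list \<Rightarrow> nat list \<Rightarrow> bool" where
  "cn_move n k p q \<longleftrightarrow> length p = n \<and> length q = n \<and>
     (\<exists>i<n. (\<forall>j<n. j \<notin> cn_window n k i \<longrightarrow> q ! j = p ! j)
           \<and> (\<forall>j<n. q ! j \<le> p ! j) \<and> q \<noteq> p)"

inductive cn_P :: "nat \<Rightarrow> nat \<Rightarrow> nat list \<Rightarrow> bool"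
  and cn_N :: "nat \<Rightarrow> nat \<Rightarrow> nat list \<Rightarrow> bool"
  for n k :: nat where
  P_intro: "(\<And>q. cn_move n k p q \<Longrightarrow> cn_N n k q) \<Longrightarrow> cn_P n k p"
| N_intro: "cn_move n k p q \<Longrightarrow> cn_P n k q \<Longrightarrow> cn_N n k p"

end

theory Submission
  imports Defs
begin

(* The two stacks of size x sit at distance l, so the only window of l + 1 consecutive stacks
   containing both is the arc between them, which misses the block a_1, ..., a_l.  Hence a move
   changes at most two of the three quantities (first x, second x, sum of the a_i), and since it
   removes tokens it cannot lead back into S_1.  Conversely, from any position of the same shape
   outside S_1 one can lower the two larger of these quantities to the smallest one and re-enter
   S_1.  As every move removes tokens, this makes S_1 a set of P-positions.  Rotations are
   automorphisms of the game, and the reflection of an element of S_1 is a rotation of another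
   one (with the a_i reversed). *)

lemma sum_list_less_if_pointwise_le:
  fixes xs ys :: "'a::ordered_cancel_comm_monoid_add list"
  assumes "length xs = length ys" "\<forall>i<length xs. xs ! i \<le> ys ! i" "xs \<noteq> ys"
  shows "sum_list xs < sum_list ys"
  using assms
proof (induction xs ys rule: list_induct2)
  case Nil
  then show ?case by simp
next
  case (Cons x xs y ys)
  have le: "x \<le> y" and le_tail: "\<forall>i<length xs. xs ! i \<le> ys ! i"
    using Cons.prems(1) by (auto dest: spec[of _ 0] spec[of _ "Suc _"])
  show ?case
  proof (cases "x = y")
    case True
    then have "sum_list xs < sum_list ys" using Cons.IH le_tail Cons.prems(2) by simp
    then show ?thesis using True by (simp add: add_strict_left_mono)
  next
    case False
    then have "x < y" using le by simp
    moreover have "sum_list xs \<le> sum_list ys"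
      using sum_list_mono2 Cons.hyps le_tail by blast
    ultimately show ?thesis by (simp add: add_less_le_mono)
  qed
qed

lemma exists_pointwise_le_with_sum_list:
  fixes b :: "nat list"
  assumes "m \<le> sum_list b"
  shows "\<exists>b'. length b' = length b \<and> (\<forall>t<length b. b' ! t \<le> b ! t) \<and> sum_list b' = m"
  using assms
proof (induction b arbitrary: m)
  case Nil
  then show ?case by simp
next
  case (Cons c b)
  show ?case
  proof (cases "m \<le> sum_list b")
    case True
    then obtain b' where "length b' = length b" "\<forall>t<length b. b' ! t \<le> b ! t" "sum_list b' = m"
      using Cons.IH by blast
    then show ?thesis by (intro exI[of _ "0 # b'"]) (auto simp: nth_Cons')
  next
    case False
    then show ?thesis using Cons.prems
      by (intro exI[of _ "(m - sum_list b) # b"]) (auto simp: nth_Cons')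
  qed
qed

lemma rotate_inverse:
  "rotate (length xs - r mod length xs) (rotate r xs) = xs"
  "rotate r (rotate (length xs - r mod length xs) xs) = xs"
proof -
  have "rotate (length xs - r mod length xs + r) xs = xs"
  proof (cases "xs = []")
    case False
    then have "length xs - r mod length xs + r mod length xs = length xs"
      by (simp add: less_imp_le)
    then have "(length xs - r mod length xs + r) mod length xs = 0"
      by (metis mod_add_right_eq mod_self)
    then show ?thesis by simp
  qed simp
  then show "rotate (length xs - r mod length xs) (rotate r xs) = xs"
    "rotate r (rotate (length xs - r mod length xs) xs) = xs"
    by (simp_all add: rotate_rotate add.commute)
qed

lemma mem_cn_window_iff_int:
  assumes "j < n"
  shows "j \<in> cn_window n k i \<longleftrightarrow> (int j - int i) mod int n < int k"
proof
  assume "j \<in> cn_window n k i"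
  then obtain t where "t < k" and "j = (i + t) mod n" unfolding cn_window_def by blast
  then have "(int j - int i) mod int n = int t mod int n"
    by (simp add: of_nat_mod mod_diff_left_eq)
  also have "\<dots> \<le> int t" by (simp add: zmod_le_nonneg_dividend)
  finally show "(int j - int i) mod int n < int k" using \<open>t < k\<close> by simp
next
  assume dist: "(int j - int i) mod int n < int k"
  define t where "t = nat ((int j - int i) mod int n)"
  have "int ((i + t) mod n) = (int i + (int j - int i) mod int n) mod int n"
    using assms by (simp add: t_def of_nat_mod)
  also have "\<dots> = int j" using assms by (simp add: mod_add_right_eq)
  finally have "j = (i + t) mod n" by simp
  moreover have "t < k" using dist assms by (simp add: t_def nat_less_iff)
  ultimately show "j \<in> cn_window n k i" unfolding cn_window_def by blast
qed

lemma mem_cn_window_iff: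
  assumes "i < n" "j < n"
  shows "j \<in> cn_window n k i \<longleftrightarrow> (if i \<le> j then j - i else j + n - i) < k"
proof -
  have "(int j - int i) mod int n = int (if i \<le> j then j - i else j + n - i)"
  proof (cases "i \<le> j")
    case False
    have "(int j - int i) mod int n = (int j - int i + int n) mod int n" by simp
    also have "\<dots> = int j - int i + int n"
      using assms False by (intro mod_pos_pos_trivial) auto
    finally show ?thesis using assms False by simp
  qed (use assms in simp)
  then show ?thesis using assms by (simp add: mem_cn_window_iff_int)
qed

lemma cn_move_rotate:
  assumes "cn_move n k p q"
  shows "cn_move n k (rotate r p) (rotate r q)"
proof -
  from assms obtain i where i: "i < n" and len: "length p = n" "length q = n"
    and outside: "\<forall>j<n. j \<notin> cn_window n k i \<longrightarrow> q ! j = p ! j"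
    and le: "\<forall>j<n. q ! j \<le> p ! j" and ne: "q \<noteq> p"
    unfolding cn_move_def by blast
  define i' where "i' = nat ((int i - int r) mod int n)"
  have i': "i' < n" using i by (simp add: i'_def nat_less_iff)
  have window: "(r + j) mod n \<notin> cn_window n k i" if "j < n" "j \<notin> cn_window n k i'" for j
  proof -
    have "(int ((r + j) mod n) - int i) mod int n = (int j - int i') mod int n"
      using i by (simp add: i'_def of_nat_mod mod_diff_left_eq mod_diff_right_eq algebra_simps)
    then show ?thesis using that i by (simp add: mem_cn_window_iff_int)
  qed
  have "rotate r q \<noteq> rotate r p"
    using ne rotate_inverse(1)[of p r] rotate_inverse(1)[of q r] len by metis
  moreover have "\<forall>j<n. j \<notin> cn_window n k i' \<longrightarrow> rotate r q ! j = rotate r p ! j"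
    using window outside len i by (simp add: nth_rotate)
  moreover have "\<forall>j<n. rotate r q ! j \<le> rotate r p ! j"
    using le len i by (simp add: nth_rotate)
  ultimately show ?thesis unfolding cn_move_def using i' len by auto
qed

lemma cn_move_rotate_iff:
  "cn_move n k (rotate r p) (rotate r q) \<longleftrightarrow> cn_move n k p q"
proof
  assume move: "cn_move n k (rotate r p) (rotate r q)"
  then have "length p = n" "length q = n" unfolding cn_move_def by auto
  then show "cn_move n k p q"
    using cn_move_rotate[OF move, of "n - r mod n"] rotate_inverse(1)[of p r] rotate_inverse(1)[of q r]
    by simp
qed (rule cn_move_rotate)

lemma cn_P_cn_N_rotate:
  shows "cn_P n k p \<Longrightarrow> cn_P n k (rotate r p)"
    and "cn_N n k q \<Longrightarrow> cn_N n k (rotate r q)"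
proof (induction rule: cn_P_cn_N.inducts)
  case (P_intro p)
  show ?case
  proof (rule cn_P_cn_N.P_intro)
    fix q :: "nat list"
    define q' where "q' = rotate (length q - r mod length q) q"
    assume "cn_move n k (rotate r p) q"
    moreover have "q = rotate r q'" unfolding q'_def by (simp add: rotate_inverse(2))
    ultimately have "cn_move n k p q'" using cn_move_rotate_iff by metis
    then show "cn_N n k q" using P_intro \<open>q = rotate r q'\<close> by blast
  qed
next
  case (N_intro p q)
  then show ?case using cn_move_rotate cn_P_cn_N.N_intro by blast
qed

lemma cn_move_sum_list_less:
  assumes "cn_move n k p q"
  shows "sum_list q < sum_list p"
  using assms unfolding cn_move_def by (auto intro: sum_list_less_if_pointwise_le)

lemma cn_P_if_move_answerable:
  assumes answer: "\<And>p q. p \<in> S \<Longrightarrow> cn_move n k p q \<Longrightarrow> \<exists>p'\<in>S. cn_move n k q p'"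
  shows "p \<in> S \<Longrightarrow> cn_P n k p"
proof (induction "sum_list p" arbitrary: p rule: less_induct)
  case less
  show ?case
  proof (rule cn_P_cn_N.P_intro)
    fix q assume move: "cn_move n k p q"
    then obtain p' where "p' \<in> S" and answer_move: "cn_move n k q p'"
      using answer less.prems by blast
    then have "sum_list p' < sum_list p"
      using cn_move_sum_list_less move by (meson less_trans)
    then have "cn_P n k p'" using less.hyps \<open>p' \<in> S\<close> by blast
    then show "cn_N n k q" using answer_move cn_P_cn_N.N_intro by blast
  qed
qed

definition s1_form :: "nat \<Rightarrow> nat \<Rightarrow> nat \<Rightarrow> nat list \<Rightarrow> nat list" where
  "s1_form l a c b = [a] @ replicate (l - 1) 0 @ [c] @ b"

(* S1 l is the paper's S_1 before closing it under rotations and reflections. *)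
definition S1 :: "nat \<Rightarrow> nat list set" where
  "S1 l = {s1_form l x x as | x as. length as = l \<and> sum_list as = x}"

lemma length_s1_form: "l \<ge> 1 \<Longrightarrow> length (s1_form l a c b) = l + 1 + length b"
  unfolding s1_form_def by simp

lemma nth_s1_form:
  "l \<ge> 1 \<Longrightarrow> s1_form l a c b ! j =
     (if j = 0 then a else if j < l then 0 else if j = l then c else b ! (j - l - 1))"
  unfolding s1_form_def by (auto simp: nth_append nth_Cons')

lemma drop_s1_form: "l \<ge> 1 \<Longrightarrow> drop (l + 1) (s1_form l a c b) = b"
  unfolding s1_form_def by simp

lemma s1_form_eq_iff: "s1_form l a c b = s1_form l a' c' b' \<longleftrightarrow> a = a' \<and> c = c' \<and> b = b'"
  unfolding s1_form_def by simp

lemma sum_list_s1_form: "sum_list (s1_form l a c b) = a + c + sum_list b"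
  unfolding s1_form_def by simp

lemma rev_s1_form:
  assumes "l \<ge> 1" "length as = l"
  shows "rev (s1_form l x x as) = rotate (l + 1) (s1_form l x x (rev as))"
proof -
  have "s1_form l x x (rev as) = ([x] @ replicate (l - 1) 0 @ [x]) @ rev as"
    unfolding s1_form_def by simp
  moreover have "length ([x] @ replicate (l - 1) 0 @ [x]) = l + 1" using assms(1) by simp
  ultimately have "rotate (l + 1) (s1_form l x x (rev as)) = rev as @ [x] @ replicate (l - 1) 0 @ [x]"
    by (metis rotate_append append.assoc)
  then show ?thesis unfolding s1_form_def by simp
qed

lemma cn_move_to_s1_form:
  assumes l: "l \<ge> 1" and len: "length b = l" "length b' = l"
    and le: "a' \<le> a" "c' \<le> c" "\<forall>t<l. b' ! t \<le> b ! t"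
    and changed: "(a', c', b') \<noteq> (a, c, b)"
    and unchanged: "a' = a \<or> c' = c \<or> b' = b"
  shows "cn_move (2 * l + 1) (l + 1) (s1_form l a c b) (s1_form l a' c' b')"
proof -
  let ?n = "2 * l + 1" and ?p = "s1_form l a c b" and ?q = "s1_form l a' c' b'"
  have "\<exists>i<?n. \<forall>j<?n. j \<notin> cn_window ?n (l + 1) i \<longrightarrow> ?q ! j = ?p ! j"
  proof -
    consider "b' = b" | "a' = a" | "c' = c" using unchanged by blast
    then show ?thesis
    proof cases
      case 1
      then show ?thesis using l by (intro exI[of _ 0]) (auto simp: mem_cn_window_iff nth_s1_form)
    next
      case 2
      then show ?thesis using l by (intro exI[of _ l]) (auto simp: mem_cn_window_iff nth_s1_form)
    next
      case 3
      then show ?thesis using l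
        by (intro exI[of _ "l + 1"]) (auto simp: mem_cn_window_iff nth_s1_form)
    qed
  qed
  moreover have "\<forall>j<?n. ?q ! j \<le> ?p ! j" using l le by (auto simp: nth_s1_form)
  moreover have "?q \<noteq> ?p" using changed by (auto simp: s1_form_eq_iff)
  ultimately show ?thesis unfolding cn_move_def using l len by (simp add: length_s1_form)
qed

lemma cn_move_from_s1_form:
  assumes l: "l \<ge> 1" and len: "length b = l"
    and move: "cn_move (2 * l + 1) (l + 1) (s1_form l a c b) q"
  obtains a' c' b' where "q = s1_form l a' c' b'" "length b' = l" "a' = a \<or> c' = c \<or> b' = b"
proof -
  let ?n = "2 * l + 1" and ?p = "s1_form l a c b"
  from move obtain i where i: "i < ?n" and len_q: "length q = ?n"
    and outside: "\<forall>j<?n. j \<notin> cn_window ?n (l + 1) i \<longrightarrow> q ! j = ?p ! j"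
    and le: "\<forall>j<?n. q ! j \<le> ?p ! j"
    unfolding cn_move_def by blast
  have q_eq: "q = s1_form l (q ! 0) (q ! l) (drop (l + 1) q)"
  proof (rule nth_equalityI)
    fix j assume "j < length q"
    moreover have "q ! j = 0" if "0 < j" "j < l"
      using le[rule_format, of j] that l by (simp add: nth_s1_form)
    ultimately show "q ! j = s1_form l (q ! 0) (q ! l) (drop (l + 1) q) ! j"
      using l len_q by (auto simp: nth_s1_form)
  qed (use l len_q in \<open>simp add: length_s1_form\<close>)
  have "q ! 0 = a \<or> q ! l = c \<or> drop (l + 1) q = b"
  proof (rule ccontr)
    assume all_changed: "\<not> (q ! 0 = a \<or> q ! l = c \<or> drop (l + 1) q = b)"
    then have "0 \<in> cn_window ?n (l + 1) i" "l \<in> cn_window ?n (l + 1) i"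
      using outside[rule_format, of 0] outside[rule_format, of l] l by (auto simp: nth_s1_form)
    then have "i = 0" using i by (auto simp: mem_cn_window_iff split: if_splits)
    then have "drop (l + 1) q = drop (l + 1) ?p"
      using outside l len_q len by (intro nth_equalityI) (auto simp: mem_cn_window_iff length_s1_form)
    then show False using all_changed drop_s1_form[OF l] by simp
  qed
  then show ?thesis using that q_eq len_q by simp
qed

lemma cn_move_from_S1_leaves_S1:
  assumes l: "l \<ge> 1" and p: "p \<in> S1 l" and move: "cn_move (2 * l + 1) (l + 1) p q"
  shows "q \<notin> S1 l"
proof
  assume "q \<in> S1 l"
  then obtain w bs where q: "q = s1_form l w w bs" and "sum_list bs = w"
    unfolding S1_def by blast
  from p obtain x as where p_eq: "p = s1_form l x x as" and "length as = l" "sum_list as = x"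
    unfolding S1_def by blast
  then obtain y z b where "q = s1_form l y z b" and unchanged: "y = x \<or> z = x \<or> b = as"
    using cn_move_from_s1_form l move by metis
  then have "y = w" "z = w" "b = bs" using q by (simp_all add: s1_form_eq_iff)
  moreover have "3 * w < 3 * x"
    using cn_move_sum_list_less[OF move] p_eq q \<open>sum_list bs = w\<close> \<open>sum_list as = x\<close>
    by (simp add: sum_list_s1_form)
  ultimately show False using unchanged \<open>sum_list bs = w\<close> \<open>sum_list as = x\<close> by auto
qed

lemma cn_move_s1_form_into_S1:
  assumes l: "l \<ge> 1" and len: "length b = l" and q: "s1_form l y z b \<notin> S1 l"
  shows "\<exists>p\<in>S1 l. cn_move (2 * l + 1) (l + 1) (s1_form l y z b) p"
proof -
  define s where "s = sum_list b"
  have lower_to: "\<exists>b'. length b' = l \<and> (\<forall>t<l. b' ! t \<le> b ! t) \<and> sum_list b' = m \<and> b' \<noteq> b"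
    if "m < s" for m
    using exists_pointwise_le_with_sum_list[of m b] that len unfolding s_def by auto
  consider "s \<le> y" "s \<le> z" | "y < s" "y \<le> z" | "z < s" "z < y" by linarith
  then show ?thesis
  proof cases
    case 1
    have "(s, s, b) \<noteq> (y, z, b)" using q len unfolding S1_def s_def by auto
    then have "cn_move (2 * l + 1) (l + 1) (s1_form l y z b) (s1_form l s s b)"
      using 1 l len by (intro cn_move_to_s1_form) auto
    moreover have "s1_form l s s b \<in> S1 l" using len unfolding S1_def s_def by blast
    ultimately show ?thesis by blast
  next
    case 2
    then obtain b' where b': "length b' = l" "\<forall>t<l. b' ! t \<le> b ! t" "sum_list b' = y" "b' \<noteq> b"
      using lower_to by blast
    then have "cn_move (2 * l + 1) (l + 1) (s1_form l y z b) (s1_form l y y b')"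
      using 2 l len by (intro cn_move_to_s1_form) auto
    moreover have "s1_form l y y b' \<in> S1 l" using b' unfolding S1_def by blast
    ultimately show ?thesis by blast
  next
    case 3
    then obtain b' where b': "length b' = l" "\<forall>t<l. b' ! t \<le> b ! t" "sum_list b' = z" "b' \<noteq> b"
      using lower_to by blast
    then have "cn_move (2 * l + 1) (l + 1) (s1_form l y z b) (s1_form l z z b')"
      using 3 l len by (intro cn_move_to_s1_form) auto
    moreover have "s1_form l z z b' \<in> S1 l" using b' unfolding S1_def by blast
    ultimately show ?thesis by blast
  qed
qed

lemma cn_P_S1:
  assumes l: "l \<ge> 1"
  shows "p \<in> S1 l \<Longrightarrow> cn_P (2 * l + 1) (l + 1) p"
proof (rule cn_P_if_move_answerable)
  fix p q assume p: "p \<in> S1 l" and move: "cn_move (2 * l + 1) (l + 1) p q"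
  from p obtain x as where "p = s1_form l x x as" "length as = l" unfolding S1_def by blast
  then obtain y z b where "q = s1_form l y z b" "length b = l"
    using cn_move_from_s1_form l move by metis
  moreover have "q \<notin> S1 l" using cn_move_from_S1_leaves_S1 l p move .
  ultimately show "\<exists>p'\<in>S1 l. cn_move (2 * l + 1) (l + 1) q p'"
    using cn_move_s1_form_into_S1 l by blast
qed

theorem lemma5:
  fixes l x r :: nat and as p :: "nat list"
  assumes "l \<ge> 1"
    and "length as = l"
    and "sum_list as = x"
    and "p = rotate r ([x] @ replicate (l - 1) 0 @ [x] @ as)
         \<or> p = rotate r (rev ([x] @ replicate (l - 1) 0 @ [x] @ as))"
  shows "cn_P (2 * l + 1) (l + 1) p"
proof -
  have P: "cn_P (2 * l + 1) (l + 1) (s1_form l x x bs)" if "length bs = l" "sum_list bs = x" for bs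
    using that cn_P_S1[OF assms(1)] unfolding S1_def by blast
  have "p = rotate r (s1_form l x x as) \<or> p = rotate r (rev (s1_form l x x as))"
    using assms(4) unfolding s1_form_def .
  then have "p = rotate r (s1_form l x x as) \<or> p = rotate (r + (l + 1)) (s1_form l x x (rev as))"
    by (simp only: rev_s1_form[OF assms(1,2)] rotate_rotate)
  then show ?thesis using P[of as] P[of "rev as"] assms(2,3) cn_P_cn_N_rotate(1) by (metis length_rev sum_list_rev)
qed

end
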